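(* Let $\mathcal{Z}$ be a finite set of latent values and fix an observation $\mathbf{x}$ and parameters $\theta,\phi$. Let $p_\theta(\mathbf{x},\mathbf{z})\ge 0$ be a joint density with $p_\theta(\mathbf{x})=\sum_{\mathbf{z}\in\mathcal{Z}} p_\theta(\mathbf{x},\mathbf{z})>0$, and let $q_\phi(\mathbf{z}\mid\mathbf{x})$ be a probability distribution on $\mathcal{Z}$ with $q_\phi(\mathbf{z}\mid\mathbf{x})>0$ for all $\mathbf{z}$. For $T\in\mathbb{R}$ let $a_{\theta,\phi}(\mathbf{z}\mid\mathbf{x},T)=\dfrac{e^{T}p_\theta(\mathbf{x},\mathbf{z})}{e^{T}p_\theta(\mathbf{x},\mathbf{z})+q_\phi(\mathbf{z}\mid\mathbf{x})}$, $Z_R(\mathbf{x},T)=\sum_{\mathbf{z}}q_\phi(\mathbf{z}\mid\mathbf{x})a_{\theta,\phi}(\mathbf{z}\mid\mathbf{x},T)$, $r_{\theta,\phi}(\mathbf{z}\mid\mathbf{x},T)=q_\phi(\mathbf{z}\mid\mathbf{x})a_{\theta,\phi}(\mathbf{z}\mid\mathbf{x},T)/Z_R(\mathbf{x},T)$, and $$\text{R-ELBO}(T)=\mathbb{E}_{\mathbf{z}\sim R_{\theta,\phi}(\cdot\mid\mathbf{x},T)}\left[\log\frac{p_\theta(\mathbf{x},\mathbf{z})\,Z_R(\mathbf{x},T)}{q_\phi(\mathbf{z}\mid\mathbf{x})\,a_{\theta,\phi}(\mathbf{z}\mid\mathbf{x},T)}\right]\le \log p_\theta(\mathbf{x}).$$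 Then the R-ELBO gets tighter as $T$ decreases, i.e. $\text{R-ELBO}(T)$ is non-increasing in $T$, but it becomes more expensive to compute: the expected number of proposals $1/Z_R(\mathbf{x},T)$ drawn by the rejection sampler to produce one sample from $R_{\theta,\phi}(\cdot\mid\mathbf{x},T)$ is non-increasing in $T$.
   Context: The rejection sampler for $R_{\theta,\phi}(\cdot\mid\mathbf{x},T)$ repeatedly draws $\mathbf{z}\sim Q_\phi(\cdot\mid\mathbf{x})$ and $u\sim U[0,1]$ independently and outputs $\mathbf{z}$ the first time $u<a_{\theta,\phi}(\mathbf{z}\mid\mathbf{x},T)$; each proposal is accepted with probability $Z_R(\mathbf{x},T)$. *)

theory Defs
  imports Complex_Main
begin

text \<open>Observation x and parameters theta, phi are fixed; we write
  p z for p_theta(x,z) and q z for q_phi(z | x), on a finite latent set Zs.\<close>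

definition accept :: "('z \<Rightarrow> real) \<Rightarrow> ('z \<Rightarrow> real) \<Rightarrow> real \<Rightarrow> 'z \<Rightarrow> real" where
  "accept p q T z = exp T * p z / (exp T * p z + q z)"

definition ZR :: "'z set \<Rightarrow> ('z \<Rightarrow> real) \<Rightarrow> ('z \<Rightarrow> real) \<Rightarrow> real \<Rightarrow> real" where
  "ZR Zs p q T = (\<Sum>z\<in>Zs. q z * accept p q T z)"

definition rdens :: "'z set \<Rightarrow> ('z \<Rightarrow> real) \<Rightarrow> ('z \<Rightarrow> real) \<Rightarrow> real \<Rightarrow> 'z \<Rightarrow> real" where
  "rdens Zs p q T z = q z * accept p q T z / ZR Zs p q T"

text \<open>Expectation under R of log(p Z_R / (q a)); terms with r z = 0 contribute 0.\<close>
definition RELBO :: "'z set \<Rightarrow> ('z \<Rightarrow> real) \<Rightarrow> ('z \<Rightarrow> real) \<Rightarrow> real \<Rightarrow> real" where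
  "RELBO Zs p q T = (\<Sum>z\<in>Zs. rdens Zs p q T z *
      ln (p z * ZR Zs p q T / (q z * accept p q T z)))"

text \<open>Expected number of proposals of the rejection sampler (geometric with success prob Z_R).\<close>
definition expected_proposals :: "'z set \<Rightarrow> ('z \<Rightarrow> real) \<Rightarrow> ('z \<Rightarrow> real) \<Rightarrow> real \<Rightarrow> real" where
  "expected_proposals Zs p q T = 1 / ZR Zs p q T"

end

theory Submission
  imports Defs
begin

text \<open>Write \<open>a = accept p q T\<close>. Each \<open>a z\<close> is logistic in \<open>T\<close>, with \<open>a' = a (1 - a)\<close>, so
  \<open>Z\<^sub>R' = \<Sum>z. q z a z (1 - a z) \<ge> 0\<close> and the expected number of proposals \<open>1 / Z\<^sub>R\<close> decreases.
  Since \<open>p / (q a) = 1 / (e\<^sup>T (1 - a))\<close>, the R-ELBO equals \<open>ln Z\<^sub>R - T + E\<^sub>R[\<ell>]\<close> with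
  \<open>\<ell> = - ln (1 - a)\<close>, and \<open>\<ell>' = a\<close>. Differentiating, \<open>Z\<^sub>R\<^sup>2\<close> times the slope of the R-ELBO is
  \<open>Z\<^sub>R \<Sum>z. q a (1 - a) \<ell> - (\<Sum>z. q a \<ell>) (\<Sum>z. q a (1 - a))\<close>, which is nonpositive by
  Chebyshev's sum inequality with weights \<open>q a\<close>, because \<open>1 - a\<close> and \<open>\<ell>\<close> are oppositely ordered.\<close>

lemma weighted_Chebyshev_sum_oppositely_ordered:
  fixes w f g :: "'a \<Rightarrow> real"
  assumes "finite S" and w: "\<And>i. i \<in> S \<Longrightarrow> w i \<ge> 0"
    and opp: "\<And>i j. i \<in> S \<Longrightarrow> j \<in> S \<Longrightarrow> (f i - f j) * (g i - g j) \<le> 0"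
  shows "(\<Sum>i\<in>S. w i) * (\<Sum>i\<in>S. w i * f i * g i) \<le> (\<Sum>i\<in>S. w i * f i) * (\<Sum>i\<in>S. w i * g i)"
proof -
  define X where "X i j = w i * w j * f j * (g j - g i)" for i j
  have "(\<Sum>i\<in>S. w i) * (\<Sum>j\<in>S. w j * f j * g j) - (\<Sum>i\<in>S. w i * g i) * (\<Sum>j\<in>S. w j * f j)
      = (\<Sum>i\<in>S. \<Sum>j\<in>S. X i j)"
    unfolding X_def sum_product sum_subtractf[symmetric]
    by (intro sum.cong refl) (simp add: algebra_simps)
  also have "\<dots> = (\<Sum>i\<in>S. \<Sum>j\<in>S. X i j + X j i) / 2"
    using sum.swap[of X S S] by (simp add: sum.distrib)
  also have "\<dots> \<le> 0"
  proof -
    have "X i j + X j i = w i * w j * ((f i - f j) * (g i - g j))" for i j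
      unfolding X_def by (simp add: algebra_simps)
    then show ?thesis
      using w opp by (simp add: sum_nonpos mult_nonneg_nonpos)
  qed
  finally show ?thesis by (simp add: mult.commute)
qed

lemma accept_nonneg: "p z \<ge> 0 \<Longrightarrow> q z > 0 \<Longrightarrow> 0 \<le> accept p q T z"
  by (simp add: accept_def add_nonneg_pos)

lemma accept_less_1: "p z \<ge> 0 \<Longrightarrow> q z > 0 \<Longrightarrow> accept p q T z < 1"
  by (simp add: accept_def add_nonneg_pos)

lemma has_real_derivative_accept:
  assumes "p z \<ge> 0" "q z > 0"
  shows "((\<lambda>T. accept p q T z) has_real_derivative
           accept p q T z * (1 - accept p q T z)) (at T)"
proof -
  have pos: "exp T * p z + q z > 0" using assms by (simp add: add_nonneg_pos)
  show ?thesis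
    unfolding accept_def using pos
    by (auto intro!: derivative_eq_intros simp: field_simps power2_eq_square)
qed

lemma has_real_derivative_neg_ln_one_minus_accept:
  assumes "p z \<ge> 0" "q z > 0"
  shows "((\<lambda>T. - ln (1 - accept p q T z)) has_real_derivative accept p q T z) (at T)"
  using assms accept_less_1[of p z q T]
  by (auto intro!: derivative_eq_intros has_real_derivative_accept)

text \<open>\<open>Z'\<close> and \<open>N'\<close> are the derivatives of \<open>Z\<close> and \<open>N\<close> when each \<open>a z\<close> moves with \<open>a' = a (1 - a)\<close>.\<close>

lemma logistic_RELBO_slope_nonpos:
  fixes w a :: "'a \<Rightarrow> real"
  assumes "finite S" and w: "\<And>z. z \<in> S \<Longrightarrow> w z \<ge> 0"
    and a: "\<And>z. z \<in> S \<Longrightarrow> 0 \<le> a z \<and> a z < 1"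
  defines "Z \<equiv> \<Sum>z\<in>S. w z * a z"
    and "Z' \<equiv> \<Sum>z\<in>S. w z * (a z * (1 - a z))"
    and "N \<equiv> \<Sum>z\<in>S. w z * (a z * - ln (1 - a z))"
    and "N' \<equiv> \<Sum>z\<in>S. w z * (a z * (1 - a z) * - ln (1 - a z) + a z * a z)"
  assumes "Z > 0"
  shows "Z' / Z - 1 + (N' * Z - N * Z') / (Z * Z) \<le> 0"
proof -
  define S1 where "S1 = (\<Sum>z\<in>S. w z * a z * (1 - a z) * - ln (1 - a z))"
  have opposite: "((1 - a i) - (1 - a j)) * (- ln (1 - a i) - - ln (1 - a j)) \<le> 0"
    if "i \<in> S" "j \<in> S" for i j
  proof (cases "a i \<le> a j")
    case True
    then show ?thesis using a[OF that(1)] a[OF that(2)] by (intro mult_nonneg_nonpos) auto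
  next
    case False
    then show ?thesis using a[OF that(1)] a[OF that(2)] by (intro mult_nonpos_nonneg) auto
  qed
  have "(\<Sum>z\<in>S. w z * a z) * (\<Sum>z\<in>S. w z * a z * (1 - a z) * - ln (1 - a z))
      \<le> (\<Sum>z\<in>S. w z * a z * (1 - a z)) * (\<Sum>z\<in>S. w z * a z * - ln (1 - a z))"
    using w a opposite
    by (intro weighted_Chebyshev_sum_oppositely_ordered \<open>finite S\<close>) auto
  then have Chebyshev: "Z * S1 \<le> Z' * N"
    unfolding Z_def Z'_def N_def S1_def by (simp add: algebra_simps)
  have N'_eq: "N' = S1 + (Z - Z')"
    unfolding N'_def S1_def Z_def Z'_def sum.distrib[symmetric] sum_subtractf[symmetric]
    by (intro sum.cong) (auto simp: algebra_simps)
  have "N' * Z - N * Z' = (Z * S1 - Z' * N) + (Z * Z - Z' * Z)"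
    unfolding N'_eq by (simp add: algebra_simps)
  with Chebyshev have "N' * Z - N * Z' \<le> Z * Z - Z' * Z"
    by linarith
  moreover have "Z' / Z - 1 + (N' * Z - N * Z') / (Z * Z)
      = ((N' * Z - N * Z') - (Z * Z - Z' * Z)) / (Z * Z)"
    using \<open>Z > 0\<close> by (simp add: field_simps)
  ultimately show ?thesis
    using \<open>Z > 0\<close> by (simp add: divide_nonpos_pos)
qed

context
  fixes Zs :: "'z set" and p q :: "'z \<Rightarrow> real"
  assumes finite_Zs: "finite Zs"
    and p_nonneg: "\<And>z. z \<in> Zs \<Longrightarrow> p z \<ge> 0"
    and p_sum_pos: "(\<Sum>z\<in>Zs. p z) > 0"
    and q_pos: "\<And>z. z \<in> Zs \<Longrightarrow> q z > 0"
begin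

lemma ZR_pos: "0 < ZR Zs p q T"
proof -
  obtain z where z: "z \<in> Zs" "p z > 0"
    using p_sum_pos by (metis not_le sum_nonpos)
  then have "0 < q z * accept p q T z"
    using q_pos[OF z(1)] by (simp add: accept_def add_pos_pos)
  also have "\<dots> \<le> ZR Zs p q T"
    unfolding ZR_def using finite_Zs z(1)
    by (intro member_le_sum mult_nonneg_nonneg accept_nonneg) (auto simp: less_imp_le p_nonneg q_pos)
  finally show ?thesis .
qed

lemma has_real_derivative_ZR:
  "(ZR Zs p q has_real_derivative (\<Sum>z\<in>Zs. q z * (accept p q T z * (1 - accept p q T z)))) (at T)"
  unfolding ZR_def[abs_def] using p_nonneg q_pos
  by (intro DERIV_sum DERIV_cmult has_real_derivative_accept) auto

lemma mono_ZR: "mono (ZR Zs p q)"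
proof (rule monoI)
  fix T U :: real
  assume "T \<le> U"
  have slope_nonneg: "0 \<le> (\<Sum>z\<in>Zs. q z * (accept p q t z * (1 - accept p q t z)))" for t
    using p_nonneg q_pos accept_nonneg[of p _ q] accept_less_1[of p _ q]
    by (intro sum_nonneg mult_nonneg_nonneg) (auto intro: less_imp_le)
  show "ZR Zs p q T \<le> ZR Zs p q U"
    using \<open>T \<le> U\<close> by (rule DERIV_nonneg_imp_nondecreasing)
      (use has_real_derivative_ZR slope_nonneg in blast)
qed

lemma antimono_expected_proposals: "antimono (expected_proposals Zs p q)"
  unfolding expected_proposals_def
  by (intro antimonoI divide_left_mono monoD[OF mono_ZR] mult_pos_pos ZR_pos) auto

lemma RELBO_closed_form:
  "RELBO Zs p q T = ln (ZR Zs p q T) - T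
     + (\<Sum>z\<in>Zs. q z * (accept p q T z * - ln (1 - accept p q T z))) / ZR Zs p q T"
proof -
  define Z where "Z = ZR Zs p q T"
  have "Z > 0" unfolding Z_def by (rule ZR_pos)
  have term_eq: "rdens Zs p q T z * ln (p z * Z / (q z * accept p q T z))
      = q z * accept p q T z / Z * (ln Z - T)
        + q z * (accept p q T z * - ln (1 - accept p q T z)) / Z"
    if z: "z \<in> Zs" for z
  proof (cases "p z = 0")
    case True
    \<comment> \<open>then \<open>rdens\<close> vanishes, so the junk value \<open>ln (0 / 0)\<close> does not matter\<close>
    then show ?thesis by (simp add: rdens_def accept_def)
  next
    case False
    then have "p z > 0" using p_nonneg[OF z] by simp
    have denom_pos: "exp T * p z + q z > 0" using q_pos[OF z] \<open>p z > 0\<close> by (simp add: add_pos_pos)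
    have one_minus: "1 - accept p q T z = q z / (exp T * p z + q z)"
      using denom_pos by (simp add: accept_def field_simps)
    have "p z * Z / (q z * accept p q T z) = Z / (exp T * (1 - accept p q T z))"
      using denom_pos \<open>p z > 0\<close> q_pos[OF z] unfolding one_minus
      by (simp add: accept_def field_simps)
    moreover have "0 < 1 - accept p q T z"
      using accept_less_1[of p z q T] p_nonneg[OF z] q_pos[OF z] by simp
    ultimately have ln_eq: "ln (p z * Z / (q z * accept p q T z)) = ln Z - T - ln (1 - accept p q T z)"
      using \<open>Z > 0\<close> by (simp add: ln_div ln_mult)
    have rdens_eq: "rdens Zs p q T z = q z * accept p q T z / Z"
      unfolding rdens_def Z_def ..
    show ?thesis
      unfolding rdens_eq ln_eq by (simp add: algebra_simps add_divide_distrib diff_divide_distrib)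
  qed
  have "RELBO Zs p q T = (\<Sum>z\<in>Zs. q z * accept p q T z / Z * (ln Z - T)
      + q z * (accept p q T z * - ln (1 - accept p q T z)) / Z)"
    unfolding RELBO_def Z_def[symmetric] by (rule sum.cong) (simp_all add: term_eq)
  also have "\<dots> = (\<Sum>z\<in>Zs. q z * accept p q T z) / Z * (ln Z - T)
      + (\<Sum>z\<in>Zs. q z * (accept p q T z * - ln (1 - accept p q T z))) / Z"
    by (simp add: sum.distrib sum_subtractf sum_negf sum_divide_distrib sum_distrib_right)
  also have "(\<Sum>z\<in>Zs. q z * accept p q T z) = Z"
    unfolding Z_def ZR_def ..
  finally show ?thesis
    using \<open>Z > 0\<close> unfolding Z_def by simp
qed

lemma antimono_RELBO: "antimono (RELBO Zs p q)"
proof -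
  define a where "a T z = accept p q T z" for T z
  define Z' where "Z' T = (\<Sum>z\<in>Zs. q z * (a T z * (1 - a T z)))" for T
  define N where "N T = (\<Sum>z\<in>Zs. q z * (a T z * - ln (1 - a T z)))" for T
  define N' where "N' T = (\<Sum>z\<in>Zs. q z * (a T z * (1 - a T z) * - ln (1 - a T z) + a T z * a T z))" for T
  have dZ: "(ZR Zs p q has_real_derivative Z' T) (at T)" for T
    unfolding Z'_def a_def by (rule has_real_derivative_ZR)
  have "((\<lambda>T. a T z * - ln (1 - a T z)) has_real_derivative
      a T z * (1 - a T z) * - ln (1 - a T z) + a T z * a T z) (at T)" if "z \<in> Zs" for z T
    unfolding a_def
    using DERIV_mult[OF has_real_derivative_accept has_real_derivative_neg_ln_one_minus_accept]
      p_nonneg[OF that] q_pos[OF that] by simp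
  then have dN: "(N has_real_derivative N' T) (at T)" for T
    unfolding N_def[abs_def] N'_def by (intro DERIV_sum DERIV_cmult)
  have dR: "(RELBO Zs p q has_real_derivative
      Z' T / ZR Zs p q T - 1 + (N' T * ZR Zs p q T - N T * Z' T) / (ZR Zs p q T * ZR Zs p q T)) (at T)"
    for T
  proof -
    have "((\<lambda>T. ln (ZR Zs p q T) - T + N T / ZR Zs p q T) has_real_derivative
        inverse (ZR Zs p q T) * Z' T - 1 + (N' T * ZR Zs p q T - N T * Z' T) / (ZR Zs p q T * ZR Zs p q T)) (at T)"
      using ZR_pos[of T]
      by (intro DERIV_add DERIV_diff DERIV_chain2[where f=ln, OF DERIV_ln] DERIV_ident
          DERIV_divide dN dZ) auto
    then show ?thesis
      unfolding RELBO_closed_form[abs_def] N_def a_def by (simp add: divide_inverse mult.commute)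
  qed
  have slope_nonpos: "Z' T / ZR Zs p q T - 1 + (N' T * ZR Zs p q T - N T * Z' T) / (ZR Zs p q T * ZR Zs p q T) \<le> 0"
    for T
    unfolding Z'_def N'_def N_def a_def ZR_def
    using p_nonneg q_pos accept_nonneg[of p _ q] accept_less_1[of p _ q] ZR_pos[of T]
    by (intro logistic_RELBO_slope_nonpos finite_Zs) (auto simp: ZR_def less_imp_le)
  show ?thesis
    by (rule antimonoI, rule DERIV_nonpos_imp_nonincreasing) (use dR slope_nonpos in blast)+
qed

end

theorem corollary1:
  fixes Zs :: "'z set" and p q :: "'z \<Rightarrow> real"
  assumes "finite Zs"
    and "\<forall>z\<in>Zs. p z \<ge> 0"
    and "(\<Sum>z\<in>Zs. p z) > 0"
    and "\<forall>z\<in>Zs. q z > 0"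
    and "(\<Sum>z\<in>Zs. q z) = 1"
  shows "antimono (\<lambda>T. RELBO Zs p q T) \<and> antimono (\<lambda>T. expected_proposals Zs p q T)"
proof -
  have "\<And>z. z \<in> Zs \<Longrightarrow> p z \<ge> 0" "\<And>z. z \<in> Zs \<Longrightarrow> q z > 0"
    using assms(2,4) by auto
  then show ?thesis
    using antimono_RELBO antimono_expected_proposals assms(1,3) by blast
qed

end
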